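(* Let $n\ge2$ and let $L_2$ and $T_2$ denote the partial maxima BLUE and BLIE of $\theta_2$, and $\mathbf{m},\mathbf{S},\mathbf{D}$ as in the context. (i) There exists a constant $a=a_n(F)$ with $0<a<1$, depending only on $n$ and $F$ (not on $\theta_1,\theta_2$), such that $T_2=aL_2$; it is given by $a=\mathbf{m}'\mathbf{D}^{-1}\mathbf{m}=\mathbf{m}'\mathbf{S}^{-1}\mathbf{m}/(1+\mathbf{m}'\mathbf{S}^{-1}\mathbf{m})$. (ii) If either $n=2$ or $F$ is such that $\operatorname{Cov}[Z_i,Z_j]\le0$ for all $i\ne j$, $i,j=1,\dots,n-1$, then the partial maxima BLUE (and BLIE) of $\theta_2$ is non-negative.
   Context: $F$ is a known, parameter-free, non-degenerate distribution function on $\mathbb{R}$ with finite variance. For unknown $\theta_1\in\mathbb{R}$, $\theta_2>0$, $X_1^*,\dots,X_n^*$ are i.i.d. with distribution function $F((x-\theta_1)/\theta_2)$ and $X^*_{j:j}=\max\{X_1^*,\dots,X_j^*\}$; $X_1,\dots,X_n$ are i.i.d. from $F$ and $X_{j:j}=\max\{X_1,\dots,X_j\}$. Spacings: $Z_i=X_{i+1:i+1}-X_{i:i}$, $i=1,\dots,n-1$, $\mathbf{Z}=(Z_1,\dots,Z_{n-1})'$, $\mathbf{m}=\mathbb{E}[\mathbf{Z}]$, $\mathbf{S}$ the covariance matrix of $\mathbf{Z}$, $\mathbf{D}=\mathbb{E}[\mathbf{Z}\mathbf{Z}']$. Linear estimators are $\mathbf{c}'\mathbf{X}^*=\sum_i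 c_iX^*_{i:i}$ with constant $c_i$. BLUE of $\theta_2$: the linear estimator unbiased for $\theta_2$ for all $(\theta_1,\theta_2)$ with minimum variance. A linear statistic $L$ is invariant for $\theta_2$ if $L(b\mathbf{X}^*+a\mathbf{1})=bL(\mathbf{X}^* )$ for all $a\in\mathbb{R}$, $b>0$; BLIE of $\theta_2$: the invariant linear statistic minimizing $\mathbb{E}[L-\theta_2]^2$. *)

theory Defs
  imports "HOL-Probability.Probability" "Jordan_Normal_Form.Matrix"
begin

text \<open>The standard sample X_1,...,X_n i.i.d. from F (= law M) is modelled by the
  product measure on functions omega with omega k = X_(k+1) for k < n.\<close>
definition pm_sample :: "nat \<Rightarrow> real measure \<Rightarrow> (nat \<Rightarrow> real) measure" where
  "pm_sample n M = PiM {..<n} (\<lambda>_. M)"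

definition pmax :: "(nat \<Rightarrow> real) \<Rightarrow> nat \<Rightarrow> real" where
  "pmax x j = Max (x ` {..<j})"

text \<open>Linear estimator c'X* = sum_{i=1}^n c_i X*_{i:i}, where X*_k = theta1 + theta2 X_k
  (so X* has distribution function F((x - theta1)/theta2)).\<close>
definition lin_est :: "nat \<Rightarrow> (nat \<Rightarrow> real) \<Rightarrow> real \<Rightarrow> real \<Rightarrow> (nat \<Rightarrow> real) \<Rightarrow> real" where
  "lin_est n c \<theta>1 \<theta>2 \<omega> = (\<Sum>i=1..n. c i * pmax (\<lambda>k. \<theta>1 + \<theta>2 * \<omega> k) i)"

definition unbiased_scale :: "nat \<Rightarrow> real measure \<Rightarrow> (nat \<Rightarrow> real) \<Rightarrow> bool" where
  "unbiased_scale n M c \<longleftrightarrow>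
     (\<forall>\<theta>1 \<theta>2. \<theta>2 > 0 \<longrightarrow> (\<integral>\<omega>. lin_est n c \<theta>1 \<theta>2 \<omega> \<partial>pm_sample n M) = \<theta>2)"

definition est_var :: "nat \<Rightarrow> real measure \<Rightarrow> (nat \<Rightarrow> real) \<Rightarrow> real \<Rightarrow> real \<Rightarrow> real" where
  "est_var n M c \<theta>1 \<theta>2 =
     (\<integral>\<omega>. (lin_est n c \<theta>1 \<theta>2 \<omega> - (\<integral>\<omega>'. lin_est n c \<theta>1 \<theta>2 \<omega>' \<partial>pm_sample n M))\<^sup>2 \<partial>pm_sample n M)"

definition is_BLUE :: "nat \<Rightarrow> real measure \<Rightarrow> (nat \<Rightarrow> real) \<Rightarrow> bool" where
  "is_BLUE n M c \<longleftrightarrow> unbiased_scale n M c \<and>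
     (\<forall>c'. unbiased_scale n M c' \<longrightarrow>
        (\<forall>\<theta>1 \<theta>2. \<theta>2 > 0 \<longrightarrow> est_var n M c \<theta>1 \<theta>2 \<le> est_var n M c' \<theta>1 \<theta>2))"

definition invariant_scale :: "nat \<Rightarrow> (nat \<Rightarrow> real) \<Rightarrow> bool" where
  "invariant_scale n c \<longleftrightarrow>
     (\<forall>y a b. b > 0 \<longrightarrow> (\<Sum>i=1..n. c i * (b * y i + a)) = b * (\<Sum>i=1..n. c i * y i))"

definition est_mse :: "nat \<Rightarrow> real measure \<Rightarrow> (nat \<Rightarrow> real) \<Rightarrow> real \<Rightarrow> real \<Rightarrow> real" where
  "est_mse n M c \<theta>1 \<theta>2 = (\<integral>\<omega>. (lin_est n c \<theta>1 \<theta>2 \<omega> - \<theta>2)\<^sup>2 \<partial>pm_sample n M)"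

definition is_BLIE :: "nat \<Rightarrow> real measure \<Rightarrow> (nat \<Rightarrow> real) \<Rightarrow> bool" where
  "is_BLIE n M c \<longleftrightarrow> invariant_scale n c \<and>
     (\<forall>c'. invariant_scale n c' \<longrightarrow>
        (\<forall>\<theta>1 \<theta>2. \<theta>2 > 0 \<longrightarrow> est_mse n M c \<theta>1 \<theta>2 \<le> est_mse n M c' \<theta>1 \<theta>2))"

definition spacing :: "nat \<Rightarrow> (nat \<Rightarrow> real) \<Rightarrow> real" where
  "spacing i \<omega> = pmax \<omega> (Suc i) - pmax \<omega> i"

definition spacing_mean :: "nat \<Rightarrow> real measure \<Rightarrow> nat \<Rightarrow> real" where
  "spacing_mean n M i = (\<integral>\<omega>. spacing i \<omega> \<partial>pm_sample n M)"

definition spacing_cov :: "nat \<Rightarrow> real measure \<Rightarrow> nat \<Rightarrow> nat \<Rightarrow> real" where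
  "spacing_cov n M i j =
     (\<integral>\<omega>. (spacing i \<omega> - spacing_mean n M i) * (spacing j \<omega> - spacing_mean n M j) \<partial>pm_sample n M)"

definition spacing_moment :: "nat \<Rightarrow> real measure \<Rightarrow> nat \<Rightarrow> nat \<Rightarrow> real" where
  "spacing_moment n M i j = (\<integral>\<omega>. spacing i \<omega> * spacing j \<omega> \<partial>pm_sample n M)"

text \<open>m = E[Z], S = Cov(Z), D = E[Z Z'] as (n-1)-vectors/matrices (0-based entries:
  entry i corresponds to Z_(i+1)).\<close>
definition m_vec :: "nat \<Rightarrow> real measure \<Rightarrow> real vec" where
  "m_vec n M = vec (n - 1) (\<lambda>i. spacing_mean n M (Suc i))"

definition S_mat :: "nat \<Rightarrow> real measure \<Rightarrow> real mat" where
  "S_mat n M = mat (n - 1) (n - 1) (\<lambda>(i, j). spacing_cov n M (Suc i) (Suc j))"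

definition D_mat :: "nat \<Rightarrow> real measure \<Rightarrow> real mat" where
  "D_mat n M = mat (n - 1) (n - 1) (\<lambda>(i, j). spacing_moment n M (Suc i) (Suc j))"

text \<open>Matrix inverse (meaningful for invertible square matrices).\<close>
definition mat_inv :: "real mat \<Rightarrow> real mat" where
  "mat_inv A = (SOME B. inverts_mat A B \<and> inverts_mat B A)"

end

theory Submission
  imports Defs "Jordan_Normal_Form.Determinant"
begin

text \<open>By Abel summation every linear statistic of the partial maxima X*_(i:i) = theta1 + theta2 X_(i:i)
  equals theta1 sum_i c_i + theta2 (X_(1:1) sum_i c_i + t'Z) with the tail sums t_j = sum_(i>j+1) c_i as
  coefficients of the spacings. Invariance means sum_i c_i = 0 and unbiasedness additionally t'm = 1;
  then the variance is theta2^2 t'St and the mean squared error theta2^2 (t'Dt - 2t'm + 1), where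
  D = S + mm'. The spacings are almost surely linearly independent, so S is positive definite, and
  completing squares identifies the BLUE tails S\<inverse>m/beta, beta = m'S\<inverse>m, and the BLIE tails
  D\<inverse>m = (1 - a) S\<inverse>m, whence a = m'D\<inverse>m = beta/(1 + beta) and T_2 = a L_2. Non-negativity
  holds because spacings are non-negative, so m \<ge> 0, and Sx = m \<ge> 0 forces x \<ge> 0 when the
  positive definite S has non-positive off-diagonal entries.\<close>

definition square_integrable :: "'a measure \<Rightarrow> ('a \<Rightarrow> real) \<Rightarrow> bool" where
  "square_integrable N f \<longleftrightarrow> f \<in> borel_measurable N \<and> integrable N (\<lambda>x. (f x)\<^sup>2)"

lemma square_integrable_mult_integrable:
  assumes "square_integrable N f" "square_integrable N g"
  shows "integrable N (\<lambda>x. f x * g x)"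
proof (rule Bochner_Integration.integrable_bound[where f="\<lambda>x. (f x)\<^sup>2 + (g x)\<^sup>2"])
  show "integrable N (\<lambda>x. (f x)\<^sup>2 + (g x)\<^sup>2)" "(\<lambda>x. f x * g x) \<in> borel_measurable N"
    using assms by (auto simp: square_integrable_def)
  have "\<bar>f x * g x\<bar> \<le> (f x)\<^sup>2 + (g x)\<^sup>2" for x
  proof -
    have "2 * \<bar>f x\<bar> * \<bar>g x\<bar> \<le> (f x)\<^sup>2 + (g x)\<^sup>2"
      using sum_squares_bound[of "\<bar>f x\<bar>" "\<bar>g x\<bar>"] by simp
    moreover have "0 \<le> \<bar>f x\<bar> * \<bar>g x\<bar>" by simp
    ultimately show ?thesis unfolding abs_mult by linarith
  qed
  then show "AE x in N. norm (f x * g x) \<le> norm ((f x)\<^sup>2 + (g x)\<^sup>2)"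
    by (auto intro!: AE_I2)
qed

lemma square_integrable_add:
  assumes "square_integrable N f" "square_integrable N g"
  shows "square_integrable N (\<lambda>x. f x + g x)"
proof -
  have "integrable N (\<lambda>x. (f x)\<^sup>2 + (g x)\<^sup>2 + 2 * (f x * g x))"
    using assms square_integrable_mult_integrable[OF assms] by (auto simp: square_integrable_def)
  then have "integrable N (\<lambda>x. (f x + g x)\<^sup>2)"
    by (simp add: power2_sum algebra_simps)
  then show ?thesis using assms by (auto simp: square_integrable_def)
qed

lemma square_integrable_cmult:
  assumes "square_integrable N f"
  shows "square_integrable N (\<lambda>x. c * f x)"
  using assms integrable_mult_right[of "c\<^sup>2" N "\<lambda>x. (f x)\<^sup>2"]
  by (auto simp: square_integrable_def power_mult_distrib)

lemma square_integrable_const: "finite_measure N \<Longrightarrow> square_integrable N (\<lambda>x. c)"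
  unfolding square_integrable_def using finite_measure.integrable_const by simp

lemma square_integrable_diff:
  assumes "square_integrable N f" "square_integrable N g"
  shows "square_integrable N (\<lambda>x. f x - g x)"
  using square_integrable_add[OF assms(1) square_integrable_cmult[OF assms(2), of "-1"]] by simp

lemma square_integrable_sum:
  assumes "finite_measure N" "\<And>i. i \<in> I \<Longrightarrow> square_integrable N (f i)"
  shows "square_integrable N (\<lambda>x. \<Sum>i\<in>I. f i x)"
  using assms(2)
proof (induction I rule: infinite_finite_induct)
  case (infinite I)
  then show ?case using square_integrable_const[OF assms(1)] by simp
next
  case empty
  then show ?case using square_integrable_const[OF assms(1)] by simp
next
  case (insert a I)
  then show ?case by (simp add: square_integrable_add)
qed

lemma square_integrable_integrable:
  "finite_measure N \<Longrightarrow> square_integrable N f \<Longrightarrow> integrable N f"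
  unfolding square_integrable_def by (blast intro: finite_measure.square_integrable_imp_integrable)


section \<open>Bilinear forms of square matrices\<close>

definition bilinear_form :: "nat \<Rightarrow> (nat \<Rightarrow> nat \<Rightarrow> real) \<Rightarrow> (nat \<Rightarrow> real) \<Rightarrow> (nat \<Rightarrow> real) \<Rightarrow> real" where
  "bilinear_form N K a b = (\<Sum>i<N. a i * (\<Sum>j<N. K i j * b j))"

definition pos_def_form :: "nat \<Rightarrow> (nat \<Rightarrow> nat \<Rightarrow> real) \<Rightarrow> bool" where
  "pos_def_form N K \<longleftrightarrow>
     (\<forall>v. 0 \<le> bilinear_form N K v v) \<and> (\<forall>v. bilinear_form N K v v = 0 \<longrightarrow> (\<forall>j<N. v j = 0))"

lemma bilinear_form_gram:
  fixes f :: "nat \<Rightarrow> 'a \<Rightarrow> real"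
  assumes "\<And>i j. i < N \<Longrightarrow> j < N \<Longrightarrow> integrable P (\<lambda>\<omega>. f i \<omega> * f j \<omega>)"
  shows "bilinear_form N (\<lambda>i j. \<integral>\<omega>. f i \<omega> * f j \<omega> \<partial>P) a b
       = (\<integral>\<omega>. (\<Sum>i<N. a i * f i \<omega>) * (\<Sum>j<N. b j * f j \<omega>) \<partial>P)"
proof -
  have "(\<integral>\<omega>. (\<Sum>i<N. a i * f i \<omega>) * (\<Sum>j<N. b j * f j \<omega>) \<partial>P)
      = (\<integral>\<omega>. (\<Sum>i<N. \<Sum>j<N. a i * b j * (f i \<omega> * f j \<omega>)) \<partial>P)"
    by (simp add: sum_product algebra_simps)
  also have "\<dots> = (\<Sum>i<N. (\<integral>\<omega>. (\<Sum>j<N. a i * b j * (f i \<omega> * f j \<omega>)) \<partial>P))"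
    using assms by (intro Bochner_Integration.integral_sum Bochner_Integration.integrable_sum) auto
  also have "\<dots> = (\<Sum>i<N. \<Sum>j<N. a i * b j * (\<integral>\<omega>. f i \<omega> * f j \<omega> \<partial>P))"
    using assms by (intro sum.cong refl, subst Bochner_Integration.integral_sum) auto
  also have "\<dots> = bilinear_form N (\<lambda>i j. \<integral>\<omega>. f i \<omega> * f j \<omega> \<partial>P) a b"
    by (simp add: bilinear_form_def sum_distrib_left algebra_simps)
  finally show ?thesis ..
qed

lemma bilinear_form_cong:
  "(\<And>i. i < N \<Longrightarrow> a i = a' i) \<Longrightarrow> (\<And>j. j < N \<Longrightarrow> b j = b' j)
   \<Longrightarrow> bilinear_form N K a b = bilinear_form N K a' b'"
  unfolding bilinear_form_def by (intro sum.cong refl) simp_all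

lemma bilinear_form_diff_left:
  "bilinear_form N K (\<lambda>i. a i - b i) c = bilinear_form N K a c - bilinear_form N K b c"
  by (simp add: bilinear_form_def left_diff_distrib sum_subtractf)

lemma bilinear_form_diff_right:
  "bilinear_form N K a (\<lambda>j. b j - c j) = bilinear_form N K a b - bilinear_form N K a c"
  by (simp add: bilinear_form_def right_diff_distrib sum_subtractf)

lemma bilinear_form_commute:
  assumes "\<And>i j. K i j = K j i"
  shows "bilinear_form N K a b = bilinear_form N K b a"
proof -
  have "bilinear_form N K a b = (\<Sum>i<N. \<Sum>j<N. a i * K i j * b j)"
    by (simp add: bilinear_form_def sum_distrib_left algebra_simps)
  also have "\<dots> = (\<Sum>j<N. \<Sum>i<N. a i * K i j * b j)" by (rule sum.swap)
  also have "\<dots> = bilinear_form N K b a"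
    by (simp add: bilinear_form_def sum_distrib_left assms algebra_simps)
  finally show ?thesis .
qed

lemma bilinear_form_solution_right:
  "(\<And>i. i < N \<Longrightarrow> (\<Sum>j<N. K i j * x j) = v i) \<Longrightarrow> bilinear_form N K a x = (\<Sum>i<N. a i * v i)"
  unfolding bilinear_form_def by simp

lemma bilinear_form_rank_one_update:
  assumes "\<And>i j. i < N \<Longrightarrow> j < N \<Longrightarrow> K' i j = K i j + m i * m j"
  shows "bilinear_form N K' a b = bilinear_form N K a b + (\<Sum>i<N. a i * m i) * (\<Sum>j<N. b j * m j)"
proof -
  have row: "(\<Sum>j<N. K' i j * b j) = (\<Sum>j<N. K i j * b j) + m i * (\<Sum>j<N. b j * m j)" if "i < N" for i
    using assms that by (simp add: sum.distrib sum_distrib_left algebra_simps)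
  have "bilinear_form N K' a b
      = (\<Sum>i<N. a i * (\<Sum>j<N. K i j * b j) + a i * m i * (\<Sum>j<N. b j * m j))"
    unfolding bilinear_form_def by (rule sum.cong) (simp_all add: row distrib_left mult.assoc)
  then show ?thesis by (simp add: bilinear_form_def sum.distrib sum_distrib_right)
qed

lemma pos_def_form_kernel:
  assumes "pos_def_form N K" "\<And>i. i < N \<Longrightarrow> (\<Sum>j<N. K i j * v j) = 0" "j < N"
  shows "v j = 0"
proof -
  have "bilinear_form N K v v = 0"
    using bilinear_form_solution_right[of N K v "\<lambda>_. 0"] assms(2) by simp
  with assms(1,3) show ?thesis unfolding pos_def_form_def by blast
qed

lemma pos_def_form_rank_one_update:
  assumes pd: "pos_def_form N K" and K': "\<And>i j. i < N \<Longrightarrow> j < N \<Longrightarrow> K' i j = K i j + m i * m j"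
  shows "pos_def_form N K'"
proof -
  have eq: "bilinear_form N K' v v = bilinear_form N K v v + (\<Sum>i<N. v i * m i)\<^sup>2" for v
    using bilinear_form_rank_one_update[OF K'] by (simp add: power2_eq_square)
  have "0 \<le> bilinear_form N K v v" for v using pd unfolding pos_def_form_def by blast
  with pd show ?thesis unfolding pos_def_form_def eq by (simp add: add_nonneg_eq_0_iff)
qed

text \<open>Write x = pos - neg with pos, neg \<ge> 0 of disjoint supports. The sign condition off the
  diagonal gives neg'K pos \<le> 0, so 0 \<le> neg'K x = neg'K pos - neg'K neg forces neg = 0.\<close>
lemma pos_def_form_solution_nonneg:
  assumes pd: "pos_def_form N K"
    and offdiag: "\<And>i j. i < N \<Longrightarrow> j < N \<Longrightarrow> i \<noteq> j \<Longrightarrow> K i j \<le> 0"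
    and sol: "\<And>i. i < N \<Longrightarrow> (\<Sum>j<N. K i j * x j) = v i"
    and v: "\<And>i. i < N \<Longrightarrow> 0 \<le> v i"
    and j: "j < N"
  shows "0 \<le> x j"
proof -
  define pos where "pos j = max (x j) 0" for j
  define neg where "neg j = max (- x j) 0" for j
  have x_eq: "x = (\<lambda>j. pos j - neg j)" by (auto simp: pos_def neg_def fun_eq_iff max_def)
  have cross: "bilinear_form N K neg pos \<le> 0"
  proof -
    have "bilinear_form N K neg pos = (\<Sum>i<N. \<Sum>j<N. neg i * K i j * pos j)"
      by (simp add: bilinear_form_def sum_distrib_left algebra_simps)
    also have "\<dots> \<le> 0"
    proof (intro sum_nonpos)
      fix i j assume "i \<in> {..<N}" "j \<in> {..<N}"
      then show "neg i * K i j * pos j \<le> 0"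
        using offdiag[of i j]
        by (cases "i = j") (auto simp: neg_def pos_def max_def mult_nonneg_nonpos mult_nonpos_nonneg)
    qed
    finally show ?thesis .
  qed
  have "0 \<le> (\<Sum>i<N. neg i * v i)"
    using v by (intro sum_nonneg) (simp add: neg_def)
  also have "(\<Sum>i<N. neg i * v i) = bilinear_form N K neg pos - bilinear_form N K neg neg"
    using bilinear_form_solution_right[of N K x v neg] sol
    by (simp add: x_eq bilinear_form_diff_right)
  moreover have "0 \<le> bilinear_form N K neg neg" using pd unfolding pos_def_form_def by blast
  ultimately have "bilinear_form N K neg neg = 0" using cross by linarith
  then have "neg j = 0" using pd j unfolding pos_def_form_def by blast
  then show ?thesis by (simp add: neg_def)
qed

lemma pos_def_form_solution_pos:
  assumes pd: "pos_def_form N K" and sol: "\<And>i. i < N \<Longrightarrow> (\<Sum>j<N. K i j * x j) = v i"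
    and nz: "i0 < N" "v i0 \<noteq> 0"
  shows "0 < (\<Sum>i<N. v i * x i)"
proof -
  have form: "bilinear_form N K x x = (\<Sum>i<N. v i * x i)"
    using bilinear_form_solution_right[of N K x v x] sol by (simp add: mult.commute)
  have "\<not> (\<forall>j<N. x j = 0)"
  proof
    assume "\<forall>j<N. x j = 0"
    then have "(\<Sum>j<N. K i0 j * x j) = 0" by simp
    with sol[OF nz(1)] nz(2) show False by simp
  qed
  then have "bilinear_form N K x x \<noteq> 0" using pd unfolding pos_def_form_def by blast
  moreover have "0 \<le> bilinear_form N K x x" using pd unfolding pos_def_form_def by blast
  ultimately show ?thesis unfolding form by simp
qed

lemma bilinear_form_diff_square:
  assumes "\<And>i j. K i j = K j i"
  shows "bilinear_form N K (\<lambda>j. t j - s j) (\<lambda>j. t j - s j)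
       = bilinear_form N K t t - 2 * bilinear_form N K t s + bilinear_form N K s s"
  using bilinear_form_commute[OF assms, where N=N and a=s and b=t]
  by (simp add: bilinear_form_diff_left bilinear_form_diff_right)

text \<open>Minimising the form subject to the constraint t'v = 1: the minimiser is K\<inverse>v / (v'K\<inverse>v).\<close>
lemma bilinear_form_constrained_min:
  assumes sym: "\<And>i j. K i j = K j i" and sol: "\<And>i. i < N \<Longrightarrow> (\<Sum>j<N. K i j * x j) = v i"
    and \<beta>: "\<beta> = (\<Sum>i<N. v i * x i)" "\<beta> \<noteq> 0" and constraint: "(\<Sum>i<N. t i * v i) = 1"
  shows "bilinear_form N K t t = bilinear_form N K (\<lambda>j. t j - x j / \<beta>) (\<lambda>j. t j - x j / \<beta>) + 1 / \<beta>"
proof -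
  have sol': "(\<Sum>j<N. K i j * (x j / \<beta>)) = v i / \<beta>" if "i < N" for i
    using sol[OF that] by (simp add: sum_divide_distrib[symmetric])
  have "bilinear_form N K t (\<lambda>j. x j / \<beta>) = (\<Sum>i<N. t i * v i) / \<beta>"
    using bilinear_form_solution_right[OF sol'] by (simp add: sum_divide_distrib)
  moreover have "bilinear_form N K (\<lambda>j. x j / \<beta>) (\<lambda>j. x j / \<beta>) = \<beta> / \<beta>\<^sup>2"
    using bilinear_form_solution_right[OF sol'] \<beta>(1)
    by (simp add: sum_divide_distrib power2_eq_square mult.commute)
  ultimately show ?thesis
    using bilinear_form_diff_square[OF sym, where N=N and t=t and s="\<lambda>j. x j / \<beta>"] constraint \<beta>(2)
    by (simp add: power2_eq_square)
qed

lemma bilinear_form_complete_square: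
  assumes sym: "\<And>i j. K i j = K j i" and sol: "\<And>i. i < N \<Longrightarrow> (\<Sum>j<N. K i j * y j) = v i"
  shows "bilinear_form N K t t - 2 * (\<Sum>i<N. t i * v i) + 1
       = bilinear_form N K (\<lambda>j. t j - y j) (\<lambda>j. t j - y j) + (1 - (\<Sum>i<N. v i * y i))"
  using bilinear_form_diff_square[OF sym, where N=N and t=t and s=y]
    bilinear_form_solution_right[OF sol, where a=t] bilinear_form_solution_right[OF sol, where a=y]
  by (simp add: mult.commute)

text \<open>Sherman--Morrison for a rank-one update: (K + vv')\<inverse>v = (1 - a) K\<inverse>v with a = v'(K + vv')\<inverse>v.\<close>
lemma rank_one_update_solution:
  assumes pd: "pos_def_form N K"
    and K': "\<And>i j. i < N \<Longrightarrow> j < N \<Longrightarrow> K' i j = K i j + v i * v j"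
    and x: "\<And>i. i < N \<Longrightarrow> (\<Sum>j<N. K i j * x j) = v i"
    and y: "\<And>i. i < N \<Longrightarrow> (\<Sum>j<N. K' i j * y j) = v i"
    and j: "j < N"
  shows "y j = (1 - (\<Sum>i<N. v i * y i)) * x j"
proof -
  let ?a = "\<Sum>i<N. v i * y i"
  have "(\<Sum>j<N. K i j * (y j - (1 - ?a) * x j)) = 0" if i: "i < N" for i
  proof -
    have "(\<Sum>j<N. K' i j * y j) = (\<Sum>j<N. K i j * y j) + v i * ?a"
      using K'[OF i] by (simp add: distrib_right sum.distrib sum_distrib_left mult.assoc)
    then have "(\<Sum>j<N. K i j * y j) = (1 - ?a) * v i"
      using y[OF i] by (simp add: algebra_simps)
    moreover have "(\<Sum>j<N. K i j * (c * x j)) = c * (\<Sum>j<N. K i j * x j)" for c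
      by (simp add: sum_distrib_left algebra_simps)
    ultimately show ?thesis
      using x[OF i] by (simp add: right_diff_distrib sum_subtractf)
  qed
  from pos_def_form_kernel[OF pd this j] show ?thesis by simp
qed

lemma pos_def_form_eq_0_iff:
  "pos_def_form N K \<Longrightarrow> bilinear_form N K v v = 0 \<longleftrightarrow> (\<forall>j<N. v j = 0)"
  using bilinear_form_cong[of N v "\<lambda>_. 0" v "\<lambda>_. 0" K]
  unfolding pos_def_form_def by (auto simp: bilinear_form_def)

lemma uniform_minimisers_iff:
  fixes cost :: "'c \<Rightarrow> real \<Rightarrow> real \<Rightarrow> real"
  assumes cost: "\<And>c \<theta>1 \<theta>2. U c \<Longrightarrow> 0 < \<theta>2 \<Longrightarrow> cost c \<theta>1 \<theta>2 = \<theta>2\<^sup>2 * (excess c + k)"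
    and nonneg: "\<And>c. U c \<Longrightarrow> 0 \<le> excess c"
    and witness: "U opt" "excess opt = 0"
  shows "(U c \<and> (\<forall>c'. U c' \<longrightarrow> (\<forall>\<theta>1 \<theta>2. \<theta>2 > 0 \<longrightarrow> cost c \<theta>1 \<theta>2 \<le> cost c' \<theta>1 \<theta>2)))
     \<longleftrightarrow> U c \<and> excess c = 0"
proof
  assume min: "U c \<and> (\<forall>c'. U c' \<longrightarrow> (\<forall>\<theta>1 \<theta>2. \<theta>2 > 0 \<longrightarrow> cost c \<theta>1 \<theta>2 \<le> cost c' \<theta>1 \<theta>2))"
  then have "cost c 0 1 \<le> cost opt 0 1" using witness(1) by simp
  then have "excess c \<le> 0" using min witness cost[of c 1 0] cost[of opt 1 0] by simp
  with min nonneg show "U c \<and> excess c = 0" by (simp add: order_antisym)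
next
  assume "U c \<and> excess c = 0"
  then show "U c \<and> (\<forall>c'. U c' \<longrightarrow> (\<forall>\<theta>1 \<theta>2. \<theta>2 > 0 \<longrightarrow> cost c \<theta>1 \<theta>2 \<le> cost c' \<theta>1 \<theta>2))"
    using cost nonneg by (simp add: mult_left_mono)
qed


lemma mult_mat_vec_mat_nth:
  fixes v :: "real vec"
  assumes "v \<in> carrier_vec N" "i < N"
  shows "(mat N N (\<lambda>(i, j). K i j) *\<^sub>v v) $ i = (\<Sum>j<N. K i j * v $ j)"
  using assms by (simp add: scalar_prod_def atLeast0LessThan)

lemma scalar_prod_eq_sum: "v \<in> carrier_vec N \<Longrightarrow> u \<bullet> v = (\<Sum>i<N. u $ i * v $ i)"
  by (simp add: scalar_prod_def atLeast0LessThan)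

lemma invertible_mat_if_trivial_kernel:
  fixes A :: "real mat"
  assumes A: "A \<in> carrier_mat N N"
    and ker: "\<And>v. v \<in> carrier_vec N \<Longrightarrow> A *\<^sub>v v = 0\<^sub>v N \<Longrightarrow> v = 0\<^sub>v N"
  shows "invertible_mat A"
proof -
  have "Determinant.det A \<noteq> 0"
    unfolding det_0_iff_vec_prod_zero_field[OF A] using ker by blast
  from det_non_zero_imp_unit[OF A this, of "()"]
  obtain B where "B \<in> carrier_mat N N" "B * A = 1\<^sub>m N" "A * B = 1\<^sub>m N"
    by (auto simp: Units_def ring_mat_def)
  with A show ?thesis unfolding invertible_mat_def inverts_mat_def by auto
qed

lemma mat_inv_mult_vec:
  fixes A :: "real mat"
  assumes A: "A \<in> carrier_mat N N" and inv: "invertible_mat A" and v: "v \<in> carrier_vec N"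
  shows "mat_inv A *\<^sub>v v \<in> carrier_vec N" "A *\<^sub>v (mat_inv A *\<^sub>v v) = v"
proof -
  have "\<exists>B. inverts_mat A B \<and> inverts_mat B A" using inv unfolding invertible_mat_def by blast
  then have "inverts_mat A (mat_inv A) \<and> inverts_mat (mat_inv A) A"
    unfolding mat_inv_def by (rule someI_ex)
  then have AB: "A * mat_inv A = 1\<^sub>m N" and BA: "mat_inv A * A = 1\<^sub>m (dim_row (mat_inv A))"
    using A unfolding inverts_mat_def by auto
  have "mat_inv A \<in> carrier_mat N N"
    using arg_cong[OF AB, of dim_col] arg_cong[OF BA, of dim_col] A by (auto intro: carrier_matI)
  then show "mat_inv A *\<^sub>v v \<in> carrier_vec N" "A *\<^sub>v (mat_inv A *\<^sub>v v) = v"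
    using A v AB by (auto simp: assoc_mult_mat_vec[symmetric])
qed

lemma pos_def_form_invertible_mat:
  assumes "pos_def_form N K"
  shows "invertible_mat (mat N N (\<lambda>(i, j). K i j))"
proof (rule invertible_mat_if_trivial_kernel)
  fix v :: "real vec"
  assume v: "v \<in> carrier_vec N" and ker: "mat N N (\<lambda>(i, j). K i j) *\<^sub>v v = 0\<^sub>v N"
  have "(\<Sum>j<N. K i j * v $ j) = 0" if i: "i < N" for i
    using arg_cong[OF ker, of "\<lambda>w. w $ i"] mult_mat_vec_mat_nth[OF v i] i by simp
  then have "v $ j = 0" if "j < N" for j
    using pos_def_form_kernel[OF assms _ that, of "\<lambda>j. v $ j"] by blast
  with v show "v = 0\<^sub>v N" by (intro eq_vecI) auto
qed simp

lemma pos_def_form_mat_inv_solves: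
  assumes "pos_def_form N K" "v \<in> carrier_vec N" "i < N"
  shows "(\<Sum>j<N. K i j * (mat_inv (mat N N (\<lambda>(i, j). K i j)) *\<^sub>v v) $ j) = v $ i"
proof -
  let ?A = "mat N N (\<lambda>(i, j). K i j)"
  have sol: "mat_inv ?A *\<^sub>v v \<in> carrier_vec N" "?A *\<^sub>v (mat_inv ?A *\<^sub>v v) = v"
    using mat_inv_mult_vec[OF _ pos_def_form_invertible_mat[OF assms(1)] assms(2)] by auto
  from arg_cong[OF sol(2), of "\<lambda>w. w $ i"] show ?thesis
    unfolding mult_mat_vec_mat_nth[OF sol(1) assms(3)] .
qed


section \<open>Partial maxima and their spacings\<close>

lemma pmax_in_image: "1 \<le> i \<Longrightarrow> pmax \<omega> i \<in> \<omega> ` {..<i}"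
  unfolding pmax_def by (intro Max_in) (auto simp: lessThan_empty_iff)

lemma pmax_fun_upd_le: "i \<le> r \<Longrightarrow> pmax (X(r := x)) i = pmax X i"
  unfolding pmax_def by (rule arg_cong[where f=Max], rule image_cong) auto

lemma pmax_fun_upd_Suc: "1 \<le> r \<Longrightarrow> pmax (X(r := x)) (Suc r) = max x (pmax X r)"
proof -
  assume r: "1 \<le> r"
  have "(X(r := x)) ` {..<Suc r} = insert x (X ` {..<r})"
    by (auto simp: lessThan_Suc image_insert)
  moreover have "X ` {..<r} \<noteq> {}" using r by (auto simp: lessThan_empty_iff)
  ultimately show ?thesis unfolding pmax_def by simp
qed

lemma pmax_affine: "1 \<le> i \<Longrightarrow> 0 < b \<Longrightarrow> pmax (\<lambda>k. a + b * \<omega> k) i = a + b * pmax \<omega> i"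
proof -
  assume i: "1 \<le> i" and b: "0 < b"
  have "mono (\<lambda>x::real. a + b * x)" using b by (auto simp: mono_def)
  moreover have "\<omega> ` {..<i} \<noteq> {}" using i by (auto simp: lessThan_empty_iff)
  ultimately show ?thesis
    unfolding pmax_def using mono_Max_commute[of "\<lambda>x. a + b * x"] by (simp add: image_image)
qed

lemma spacing_nonneg: "1 \<le> i \<Longrightarrow> 0 \<le> spacing i \<omega>"
  unfolding spacing_def pmax_def by (auto intro!: Max_mono simp: lessThan_empty_iff)

text \<open>tail_sum n c j is the coefficient of the spacing Z_(j+1) when the linear statistic
  sum_(i=1..n) c_i X_(i:i) is rewritten in terms of X_(1:1) and the spacings.\<close>
definition tail_sum :: "nat \<Rightarrow> (nat \<Rightarrow> real) \<Rightarrow> nat \<Rightarrow> real" where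
  "tail_sum n c j = (\<Sum>i=j+2..n. c i)"

lemma sum_eq_first_plus_tail_sums:
  fixes c Y :: "nat \<Rightarrow> real"
  shows "(\<Sum>i=1..Suc p. c i * Y i) = (\<Sum>i=1..Suc p. c i) * Y 1
          + (\<Sum>j<p. (\<Sum>i=j+2..Suc p. c i) * (Y (j+2) - Y (j+1)))"
proof (induction p)
  case 0 show ?case by simp
next
  case (Suc p)
  have tel: "(\<Sum>j<Suc p. Y (j+2) - Y (j+1)) = Y (Suc p + 1) - Y 1"
    using sum_lessThan_telescope[of "\<lambda>j. Y (j+1)" "Suc p"] by simp
  have "(\<Sum>j<Suc p. (\<Sum>i=j+2..Suc (Suc p). c i) * (Y (j+2) - Y (j+1)))
      = (\<Sum>j<Suc p. (\<Sum>i=j+2..Suc p. c i) * (Y (j+2) - Y (j+1)) + c (Suc (Suc p)) * (Y (j+2) - Y (j+1)))"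
    by (rule sum.cong) (simp_all add: sum.cl_ivl_Suc algebra_simps)
  also have "\<dots> = (\<Sum>j<p. (\<Sum>i=j+2..Suc p. c i) * (Y (j+2) - Y (j+1))) + c (Suc (Suc p)) * (Y (Suc p + 1) - Y 1)"
    by (simp only: sum.distrib sum_distrib_left[symmetric] tel) simp
  finally show ?case using Suc.IH by (simp add: sum.cl_ivl_Suc algebra_simps)
qed

text \<open>Coefficients with prescribed tail sums t_0, ..., t_(n-2) and total sum 0: they are the
  differences of the padded sequence 0, t_0, ..., t_(n-2), 0.\<close>
definition padded_tails :: "nat \<Rightarrow> (nat \<Rightarrow> real) \<Rightarrow> nat \<Rightarrow> real" where
  "padded_tails n t k = (if 1 \<le> k \<and> k < n then t (k - 1) else 0)"

definition coef_of_tails :: "nat \<Rightarrow> (nat \<Rightarrow> real) \<Rightarrow> nat \<Rightarrow> real" where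
  "coef_of_tails n t i = padded_tails n t (i - 1) - padded_tails n t i"

lemma sum_telescope_pred: "m \<le> n \<Longrightarrow> (\<Sum>i=Suc m..n. f (i - 1) - f i) = f m - (f n :: real)"
  using sum_telescope''[of m n f] by (simp add: sum_subtractf)

lemma sum_coef_of_tails: "(\<Sum>i=1..n. coef_of_tails n t i) = 0"
  using sum_telescope_pred[of 0 n "padded_tails n t"] by (simp add: coef_of_tails_def padded_tails_def)

lemma tail_sum_coef_of_tails: "j + 1 < n \<Longrightarrow> tail_sum n (coef_of_tails n t) j = t j"
  using sum_telescope_pred[of "j + 1" n "padded_tails n t"]
  by (simp add: tail_sum_def coef_of_tails_def padded_tails_def)

lemma invariant_scale_iff: "invariant_scale n c \<longleftrightarrow> (\<Sum>i=1..n. c i) = 0"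
proof
  assume "invariant_scale n c"
  then have "\<forall>a b. 0 < b \<longrightarrow> (\<Sum>i=1..n. c i * (b * 0 + a)) = b * (\<Sum>i=1..n. c i * (0::real))"
    unfolding invariant_scale_def by (rule spec)
  from this[rule_format, of 1 1] show "(\<Sum>i=1..n. c i) = 0" by simp
next
  assume sum_zero: "(\<Sum>i=1..n. c i) = 0"
  have "(\<Sum>i=1..n. c i * (b * y i + a)) = b * (\<Sum>i=1..n. c i * y i) + a * (\<Sum>i=1..n. c i)"
    for y :: "nat \<Rightarrow> real" and a b
    by (simp add: sum.distrib sum_distrib_left algebra_simps)
  with sum_zero show "invariant_scale n c" by (simp add: invariant_scale_def)
qed


lemma AE_witness:
  assumes "AE x in M. P x" "emeasure M {x \<in> space M. Q x} \<noteq> 0"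
  obtains x where "x \<in> space M" "Q x" "P x"
proof -
  have "\<exists>x\<in>space M. Q x \<and> P x"
  proof (rule ccontr)
    assume "\<not> (\<exists>x\<in>space M. Q x \<and> P x)"
    then have "AE x in M. P x \<longrightarrow> \<not> Q x" by (auto intro: AE_I2)
    with assms(1) have "AE x in M. \<not> Q x" by (rule AE_mp)
    with assms(2) show False using emeasure_eq_0_AE by blast
  qed
  with that show ?thesis by blast
qed

lemma (in prob_space) prob_gt_expectation_pos:
  fixes f :: "'a \<Rightarrow> real"
  assumes f: "integrable M f" and nonconst: "\<And>c. \<not> (AE x in M. f x = c)"
  shows "0 < prob {x \<in> space M. expectation f < f x}"
proof (rule ccontr)
  let ?E = "expectation f"
  have [measurable]: "f \<in> borel_measurable M" using f by (rule borel_measurable_integrable)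
  have "{x \<in> space M. ?E < f x} \<in> events" by measurable
  moreover assume "\<not> 0 < prob {x \<in> space M. ?E < f x}"
  ultimately have "{x \<in> space M. ?E < f x} \<in> null_sets M"
    using measure_nonneg[of M "{x \<in> space M. ?E < f x}"]
    by (simp add: null_sets_def emeasure_eq_measure)
  then have "AE x in M. x \<notin> {x \<in> space M. ?E < f x}" by (rule AE_not_in)
  then have "AE x in M. 0 \<le> ?E - f x" by (rule AE_mp) (auto intro!: AE_I2)
  moreover have "integrable M (\<lambda>x. ?E - f x)" using f by simp
  moreover have "(\<integral>x. ?E - f x \<partial>M) = 0" using f by (simp add: prob_space)
  ultimately have "AE x in M. ?E - f x = 0" using integral_nonneg_eq_0_iff_AE by blast
  then have "AE x in M. f x = ?E" by (rule AE_mp) (auto intro!: AE_I2)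
  with nonconst show False by blast
qed

lemma (in real_distribution) exists_two_sided_split:
  assumes integrable: "integrable M (\<lambda>x. x)" and nondegenerate: "\<And>c. measure M {c} \<noteq> 1"
  shows "\<exists>u. 0 < prob {..<u} \<and> 0 < prob {u<..}"
proof -
  have not_const: "\<not> (AE x in M. x = c)" for c
  proof
    assume "AE x in M. x = c"
    then have "prob {c} = 1" using AE_in_set_eq_1[of "{c}"] by simp
    with nondegenerate show False by blast
  qed
  have not_const_neg: "\<not> (AE x in M. - x = c)" for c
  proof
    assume "AE x in M. - x = c"
    then have "AE x in M. x = - c" by (rule AE_mp) (auto intro!: AE_I2)
    with not_const show False by blast
  qed
  let ?u = "expectation (\<lambda>x. x)"
  have "0 < prob {x \<in> space M. ?u < x}"
    by (rule prob_gt_expectation_pos[OF integrable not_const])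
  moreover have "0 < prob {x \<in> space M. expectation (\<lambda>x. - x) < - x}"
    by (rule prob_gt_expectation_pos) (use integrable not_const_neg in auto)
  ultimately show ?thesis by (intro exI[of _ ?u]) (simp add: greaterThan_def lessThan_def)
qed

lemma AE_PiM_fun_upd:
  assumes M: "prob_space M" and ae: "AE \<omega> in PiM (insert r I) (\<lambda>_. M). P \<omega>"
  shows "AE x in M. AE X in PiM I (\<lambda>_. M). P (X(r := x))"
proof -
  interpret pair_prob_space M "PiM I (\<lambda>_. M)"
    using M by (intro pair_prob_space.intro pair_sigma_finite.intro prob_space_imp_sigma_finite prob_space_PiM)
  have meas: "(\<lambda>z. (snd z)(r := fst z)) \<in> measurable (M \<Otimes>\<^sub>M PiM I (\<lambda>_. M)) (PiM (insert r I) (\<lambda>_. M))"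
    by (rule measurable_fun_upd[where J=I]) auto
  have distr: "distr (M \<Otimes>\<^sub>M PiM I (\<lambda>_. M)) (PiM (insert r I) (\<lambda>_. M)) (\<lambda>z. (snd z)(r := fst z))
      = PiM (insert r I) (\<lambda>_. M)"
    using distr_pair_PiM_eq_PiM[of I "\<lambda>_. M" r] M by (simp add: split_beta')
  have "AE \<omega> in distr (M \<Otimes>\<^sub>M PiM I (\<lambda>_. M)) (PiM (insert r I) (\<lambda>_. M))
      (\<lambda>z. (snd z)(r := fst z)). P \<omega>"
    using ae unfolding distr .
  from AE_distrD[OF meas this] show ?thesis using AE_pair by fastforce
qed

lemma emeasure_PiM_prefix_in:
  assumes M: "prob_space M" and r: "{..<r} \<subseteq> I" and A: "A \<in> sets M"
  shows "emeasure (PiM I (\<lambda>_. M)) {X \<in> space (PiM I (\<lambda>_. M)). \<forall>i<r. X i \<in> A} = emeasure M A ^ r"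
proof -
  have "{X \<in> space (PiM I (\<lambda>_. M)). \<forall>i<r. X i \<in> A} = prod_emb I (\<lambda>_. M) {..<r} (PiE {..<r} (\<lambda>_. A))"
    unfolding prod_emb_def space_PiM by (auto simp: PiE_iff extensional_def)
  also have "emeasure (PiM I (\<lambda>_. M)) \<dots> = (\<Prod>i<r. emeasure M A)"
    using M r A by (intro emeasure_PiM_emb) auto
  finally show ?thesis by simp
qed


locale partial_maxima_sample = real_distribution M for M :: "real measure" +
  fixes n :: nat
  assumes finite_variance: "integrable M (\<lambda>x. x\<^sup>2)"
    and nondegenerate: "\<And>c. measure M {c} \<noteq> 1"
    and two_le_n: "2 \<le> n"
begin

abbreviation P :: "(nat \<Rightarrow> real) measure" where "P \<equiv> pm_sample n M"

text \<open>There are N = n - 1 spacings; index j < N stands for Z_(j+1).\<close>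
abbreviation N :: nat where "N \<equiv> n - 1"

definition mu :: "nat \<Rightarrow> real" where "mu j = spacing_mean n M (Suc j)"
definition S :: "nat \<Rightarrow> nat \<Rightarrow> real" where "S i j = spacing_cov n M (Suc i) (Suc j)"
definition D :: "nat \<Rightarrow> nat \<Rightarrow> real" where "D i j = spacing_moment n M (Suc i) (Suc j)"

definition spacing_comb :: "(nat \<Rightarrow> real) \<Rightarrow> (nat \<Rightarrow> real) \<Rightarrow> real" where
  "spacing_comb t \<omega> = (\<Sum>j<N. t j * spacing (Suc j) \<omega>)"

lemma prob_space_P: "prob_space P"
  unfolding pm_sample_def by (rule prob_space_PiM) (rule prob_space_axioms)

lemma finite_measure_P: "finite_measure P"
  using prob_space_P by (simp add: prob_space_def)

lemma component_measurable: "k < n \<Longrightarrow> (\<lambda>\<omega>. \<omega> k) \<in> measurable P M"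
  unfolding pm_sample_def by (rule measurable_component_singleton) simp

lemma component_borel_measurable: "k < n \<Longrightarrow> (\<lambda>\<omega>. \<omega> k) \<in> borel_measurable P"
  using component_measurable measurable_cong_sets[OF refl events_eq_borel] by blast

lemma component_square_integrable: "k < n \<Longrightarrow> square_integrable P (\<lambda>\<omega>. \<omega> k)"
proof -
  assume k: "k < n"
  have distr: "distr P M (\<lambda>\<omega>. \<omega> k) = M"
    unfolding pm_sample_def using k by (intro distr_PiM_component prob_space_axioms) simp
  have "integrable (distr P M (\<lambda>\<omega>. \<omega> k)) (\<lambda>x. x\<^sup>2)"
    using finite_variance by (simp add: distr)
  then have "integrable P (\<lambda>\<omega>. (\<omega> k)\<^sup>2)"
    by (subst (asm) integrable_distr_eq[OF component_measurable[OF k]]) simp_all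
  with component_borel_measurable[OF k] show ?thesis by (simp add: square_integrable_def)
qed

lemma pmax_square_integrable: "1 \<le> i \<Longrightarrow> i \<le> n \<Longrightarrow> square_integrable P (\<lambda>\<omega>. pmax \<omega> i)"
proof -
  assume i: "1 \<le> i" "i \<le> n"
  have meas: "(\<lambda>\<omega>. pmax \<omega> i) \<in> borel_measurable P"
    unfolding pmax_def by (rule borel_measurable_Max) (use i component_borel_measurable in auto)
  have sum: "integrable P (\<lambda>\<omega>. \<Sum>k<i. (\<omega> k)\<^sup>2)"
    by (rule Bochner_Integration.integrable_sum)
      (use i component_square_integrable in \<open>auto simp: square_integrable_def\<close>)
  have bound: "(pmax \<omega> i)\<^sup>2 \<le> (\<Sum>k<i. (\<omega> k)\<^sup>2)" for \<omega>
  proof -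
    obtain k where "k < i" "pmax \<omega> i = \<omega> k" using pmax_in_image[OF i(1), of \<omega>] by auto
    then show ?thesis using member_le_sum[of k "{..<i}" "\<lambda>k. (\<omega> k)\<^sup>2"] by simp
  qed
  have "integrable P (\<lambda>\<omega>. (pmax \<omega> i)\<^sup>2)"
  proof (rule Bochner_Integration.integrable_bound[OF sum])
    show "(\<lambda>\<omega>. (pmax \<omega> i)\<^sup>2) \<in> borel_measurable P" using meas by simp
    show "AE \<omega> in P. norm ((pmax \<omega> i)\<^sup>2) \<le> norm (\<Sum>k<i. (\<omega> k)\<^sup>2)"
      using bound order_trans[OF zero_le_power2 bound] by (intro AE_I2) simp
  qed
  with meas show ?thesis by (simp add: square_integrable_def)
qed

lemma spacing_square_integrable: "j < N \<Longrightarrow> square_integrable P (spacing (Suc j))"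
  using square_integrable_diff[OF pmax_square_integrable pmax_square_integrable, of "Suc (Suc j)" "Suc j"]
  by (simp add: spacing_def[abs_def])

lemma spacing_integrable: "j < N \<Longrightarrow> integrable P (spacing (Suc j))"
  by (rule square_integrable_integrable[OF finite_measure_P spacing_square_integrable])

lemma spacing_comb_square_integrable: "square_integrable P (spacing_comb t)"
  unfolding spacing_comb_def[abs_def]
  by (intro square_integrable_sum finite_measure_P square_integrable_cmult spacing_square_integrable) simp

lemma integral_spacing_comb: "(\<integral>\<omega>. spacing_comb t \<omega> \<partial>P) = (\<Sum>j<N. t j * mu j)"
  unfolding spacing_comb_def mu_def spacing_mean_def
  by (subst Bochner_Integration.integral_sum) (auto simp: spacing_integrable)

lemma centered_spacing_square_integrable:
  "j < N \<Longrightarrow> square_integrable P (\<lambda>\<omega>. spacing (Suc j) \<omega> - mu j)"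
  by (intro square_integrable_diff spacing_square_integrable square_integrable_const finite_measure_P)

lemma S_sym: "S i j = S j i"
  by (simp add: S_def spacing_cov_def mult.commute)

lemma D_sym: "D i j = D j i"
  by (simp add: D_def spacing_moment_def mult.commute)

lemma bilinear_form_S:
  "bilinear_form N S a b
     = (\<integral>\<omega>. (\<Sum>i<N. a i * (spacing (Suc i) \<omega> - mu i)) * (\<Sum>j<N. b j * (spacing (Suc j) \<omega> - mu j)) \<partial>P)"
proof -
  have "S = (\<lambda>i j. \<integral>\<omega>. (spacing (Suc i) \<omega> - mu i) * (spacing (Suc j) \<omega> - mu j) \<partial>P)"
    by (simp add: fun_eq_iff S_def spacing_cov_def mu_def)
  then show ?thesis
    by (simp add: bilinear_form_gram square_integrable_mult_integrable centered_spacing_square_integrable)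
qed

lemma bilinear_form_D:
  "bilinear_form N D a b = (\<integral>\<omega>. spacing_comb a \<omega> * spacing_comb b \<omega> \<partial>P)"
proof -
  have "D = (\<lambda>i j. \<integral>\<omega>. spacing (Suc i) \<omega> * spacing (Suc j) \<omega> \<partial>P)"
    by (simp add: fun_eq_iff D_def spacing_moment_def)
  then show ?thesis
    by (simp add: bilinear_form_gram square_integrable_mult_integrable spacing_square_integrable
        spacing_comb_def)
qed

lemma D_eq_S_plus_rank_one: "i < N \<Longrightarrow> j < N \<Longrightarrow> D i j = S i j + mu i * mu j"
proof -
  assume i: "i < N" and j: "j < N"
  let ?Z = "\<lambda>k \<omega>. spacing (Suc k) \<omega>"
  have "(\<lambda>\<omega>. ?Z i \<omega> * ?Z j \<omega>)
      = (\<lambda>\<omega>. (?Z i \<omega> - mu i) * (?Z j \<omega> - mu j) + mu j * ?Z i \<omega> + mu i * ?Z j \<omega> - mu i * mu j)"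
    by (simp add: fun_eq_iff algebra_simps)
  moreover have "integrable P (\<lambda>\<omega>. (?Z i \<omega> - mu i) * (?Z j \<omega> - mu j))"
    using i j by (intro square_integrable_mult_integrable square_integrable_diff spacing_square_integrable
        square_integrable_const finite_measure_P)
  ultimately show ?thesis
    using i j prob_space.prob_space[OF prob_space_P]
    by (simp add: D_def S_def spacing_moment_def spacing_cov_def spacing_integrable
        finite_measure.integrable_const[OF finite_measure_P] mu_def[symmetric] spacing_mean_def[symmetric])
qed

lemma spacing_comb_fun_upd_last:
  assumes k: "k < N" and above: "\<And>j. k < j \<Longrightarrow> j < N \<Longrightarrow> t j = 0"
  shows "spacing_comb t (X(Suc k := x))
       = (\<Sum>j<k. t j * spacing (Suc j) X) + t k * (max x (pmax X (Suc k)) - pmax X (Suc k))"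
proof -
  have "spacing_comb t (X(Suc k := x)) = (\<Sum>j<Suc k. t j * spacing (Suc j) (X(Suc k := x)))"
    unfolding spacing_comb_def by (rule sum.mono_neutral_right) (use k above in auto)
  also have "\<dots> = (\<Sum>j<k. t j * spacing (Suc j) X) + t k * spacing (Suc k) (X(Suc k := x))"
    by (simp add: spacing_def pmax_fun_upd_le)
  also have "spacing (Suc k) (X(Suc k := x)) = max x (pmax X (Suc k)) - pmax X (Suc k)"
    by (simp add: spacing_def pmax_fun_upd_le pmax_fun_upd_Suc)
  finally show ?thesis .
qed

lemma AE_resample_witness:
  fixes I :: "nat set" and r :: nat
  assumes ae: "AE x in M. AE X in PiM I (\<lambda>_. M). Pr (X(r := x))" and r: "{..<r} \<subseteq> I"
  obtains x1 x2 u X where "x1 \<noteq> x2" "u < x1" "\<And>i. i < r \<Longrightarrow> X i < u"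
    "Pr (X(r := x1))" "Pr (X(r := x2))"
proof -
  have "(\<lambda>x. x) \<in> borel_measurable M"
    using measurable_ident_sets[OF events_eq_borel] by simp
  then have "integrable M (\<lambda>x. x)"
    using finite_variance by (rule square_integrable_imp_integrable)
  then obtain u where u: "0 < prob {..<u}" "0 < prob {u<..}"
    using exists_two_sided_split[OF _ nondegenerate] by blast
  have "emeasure M {x \<in> space M. u < x} \<noteq> 0"
    using u(2) by (simp add: emeasure_eq_measure greaterThan_def)
  from AE_witness[OF ae this]
  obtain x1 where x1: "u < x1" "AE X in PiM I (\<lambda>_. M). Pr (X(r := x1))" by blast
  have "prob (space M - {x1}) = 1 - prob {x1}" by (rule prob_compl) simp
  then have "emeasure M {x \<in> space M. x \<noteq> x1} \<noteq> 0"
    using nondegenerate[of x1] measure_le_1[of "{x1}"]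
    by (simp add: emeasure_eq_measure set_diff_eq)
  from AE_witness[OF ae this]
  obtain x2 where x2: "x2 \<noteq> x1" "AE X in PiM I (\<lambda>_. M). Pr (X(r := x2))" by blast
  have "emeasure (PiM I (\<lambda>_. M)) {X \<in> space (PiM I (\<lambda>_. M)). \<forall>i<r. X i \<in> {..<u}}
      = emeasure M {..<u} ^ r"
    by (rule emeasure_PiM_prefix_in[OF prob_space_axioms r]) simp
  then have "emeasure (PiM I (\<lambda>_. M)) {X \<in> space (PiM I (\<lambda>_. M)). \<forall>i<r. X i \<in> {..<u}} \<noteq> 0"
    using u(1) by (simp add: emeasure_eq_measure)
  from AE_witness[OF AE_conjI[OF x1(2) x2(2)] this]
  obtain X where "\<forall>i<r. X i < u" "Pr (X(r := x1))" "Pr (X(r := x2))" by auto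
  then show ?thesis using that[of x1 x2 u X] x1(1) x2(1) by auto
qed

text \<open>If k is the last index with a nonzero
  coefficient, then resampling the observation X_(k+2) moves only Z_(k+1) = max(x, X_(k+1:k+1)) - X_(k+1:k+1),
  which takes two different values once the earlier observations are small.\<close>
lemma spacing_comb_AE_const_imp_zero:
  assumes ae: "AE \<omega> in P. spacing_comb t \<omega> = C" and j: "j < N"
  shows "t j = 0"
proof (rule ccontr)
  assume "t j \<noteq> 0"
  define k where "k = Max {j. j < N \<and> t j \<noteq> 0}"
  have k: "k < N" "t k \<noteq> 0" and above: "\<And>j. k < j \<Longrightarrow> j < N \<Longrightarrow> t j = 0"
    using Max_in[of "{j. j < N \<and> t j \<noteq> 0}"] Max_ge[of "{j. j < N \<and> t j \<noteq> 0}"] \<open>t j \<noteq> 0\<close> j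
    unfolding k_def by fastforce+
  have ins: "insert (Suc k) ({..<n} - {Suc k}) = {..<n}" using k by auto
  have "AE \<omega> in PiM (insert (Suc k) ({..<n} - {Suc k})) (\<lambda>_. M). spacing_comb t \<omega> = C"
    using ae unfolding ins pm_sample_def .
  then have "AE x in M. AE X in PiM ({..<n} - {Suc k}) (\<lambda>_. M). spacing_comb t (X(Suc k := x)) = C"
    by (rule AE_PiM_fun_upd[OF prob_space_axioms])
  moreover have "{..<Suc k} \<subseteq> {..<n} - {Suc k}" using k by auto
  ultimately obtain x1 x2 u X where x: "x1 \<noteq> x2" "u < x1" and X: "\<And>i. i < Suc k \<Longrightarrow> X i < u"
    and C: "spacing_comb t (X(Suc k := x1)) = C" "spacing_comb t (X(Suc k := x2)) = C"
    by (rule AE_resample_witness) blast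
  define y where "y = pmax X (Suc k)"
  have "y < u" using pmax_in_image[of "Suc k" X] X unfolding y_def by auto
  have "t k * (max x1 y - y) = t k * (max x2 y - y)"
    using C spacing_comb_fun_upd_last[of k t, OF k(1) above, of X] unfolding y_def
    by (metis add_left_cancel)
  with k(2) have "max x1 y = max x2 y" by simp
  with x \<open>y < u\<close> show False by (auto simp: max_def split: if_splits)
qed

lemma S_pos_def: "pos_def_form N S"
proof -
  define Y where "Y v \<omega> = (\<Sum>i<N. v i * (spacing (Suc i) \<omega> - mu i))" for v \<omega>
  have form: "bilinear_form N S v v = (\<integral>\<omega>. (Y v \<omega>)\<^sup>2 \<partial>P)" for v
    unfolding bilinear_form_S Y_def by (simp add: power2_eq_square)
  have "v j = 0" if zero: "bilinear_form N S v v = 0" and j: "j < N" for v j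
  proof -
    have "square_integrable P (Y v)"
      unfolding Y_def[abs_def]
      by (intro square_integrable_sum finite_measure_P square_integrable_cmult
          centered_spacing_square_integrable) simp
    then have "AE \<omega> in P. Y v \<omega> = 0"
      using zero integral_nonneg_eq_0_iff_AE[of P "\<lambda>\<omega>. (Y v \<omega>)\<^sup>2"] form
      by (simp add: square_integrable_def)
    moreover have "spacing_comb v \<omega> = Y v \<omega> + (\<Sum>j<N. v j * mu j)" for \<omega>
      unfolding Y_def spacing_comb_def by (simp add: right_diff_distrib sum_subtractf)
    ultimately have "AE \<omega> in P. spacing_comb v \<omega> = (\<Sum>j<N. v j * mu j)"
      by (auto elim!: AE_mp intro!: AE_I2)
    with j show ?thesis using spacing_comb_AE_const_imp_zero by blast
  qed
  then show ?thesis unfolding pos_def_form_def form by auto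
qed

lemma D_pos_def: "pos_def_form N D"
  using pos_def_form_rank_one_update[OF S_pos_def D_eq_S_plus_rank_one] .

lemma mu_nonneg: "0 \<le> mu j"
  unfolding mu_def spacing_mean_def by (rule integral_nonneg_AE) (simp add: spacing_nonneg)

lemma mu_first_pos: "0 < mu 0"
proof (rule ccontr)
  assume "\<not> 0 < mu 0"
  then have "(\<integral>\<omega>. spacing 1 \<omega> \<partial>P) = 0"
    using mu_nonneg[of 0] by (simp add: mu_def spacing_mean_def)
  then have "AE \<omega> in P. spacing 1 \<omega> = 0"
    using integral_nonneg_eq_0_iff_AE[OF spacing_integrable[of 0]] two_le_n by (simp add: spacing_nonneg)
  moreover have "spacing_comb (\<lambda>j. if j = 0 then 1 else 0) \<omega> = spacing 1 \<omega>" for \<omega>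
  proof -
    have "spacing_comb (\<lambda>j. if j = 0 then 1 else 0) \<omega> = (\<Sum>j<N. if j = 0 then spacing (Suc j) \<omega> else 0)"
      unfolding spacing_comb_def by (rule sum.cong) auto
    also have "\<dots> = spacing 1 \<omega>" using two_le_n by (simp add: sum.delta)
    finally show ?thesis .
  qed
  ultimately have "AE \<omega> in P. spacing_comb (\<lambda>j. if j = 0 then 1 else 0) \<omega> = 0" by simp
  from spacing_comb_AE_const_imp_zero[OF this, of 0] two_le_n show False by simp
qed

subsection \<open>Linear estimators of the scale\<close>

lemma lin_est_eq:
  assumes "0 < \<theta>2"
  shows "lin_est n c \<theta>1 \<theta>2 \<omega>
       = \<theta>1 * (\<Sum>i=1..n. c i) + \<theta>2 * ((\<Sum>i=1..n. c i) * pmax \<omega> 1 + spacing_comb (tail_sum n c) \<omega>)"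
proof -
  have "lin_est n c \<theta>1 \<theta>2 \<omega> = (\<Sum>i=1..n. c i * (\<theta>1 + \<theta>2 * pmax \<omega> i))"
    unfolding lin_est_def by (rule sum.cong) (simp_all add: pmax_affine assms)
  also have "\<dots> = \<theta>1 * (\<Sum>i=1..n. c i) + \<theta>2 * (\<Sum>i=1..n. c i * pmax \<omega> i)"
    by (simp add: sum.distrib sum_distrib_left algebra_simps)
  also have "(\<Sum>i=1..n. c i * pmax \<omega> i) = (\<Sum>i=1..n. c i) * pmax \<omega> 1 + spacing_comb (tail_sum n c) \<omega>"
    using sum_eq_first_plus_tail_sums[of c "pmax \<omega>" N] two_le_n
    by (simp add: spacing_comb_def tail_sum_def spacing_def)
  finally show ?thesis .
qed

lemma lin_est_invariant:
  "(\<Sum>i=1..n. c i) = 0 \<Longrightarrow> 0 < \<theta>2 \<Longrightarrow> lin_est n c \<theta>1 \<theta>2 \<omega> = \<theta>2 * spacing_comb (tail_sum n c) \<omega>"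
  by (simp add: lin_est_eq)

lemma integral_lin_est:
  assumes "0 < \<theta>2"
  shows "(\<integral>\<omega>. lin_est n c \<theta>1 \<theta>2 \<omega> \<partial>P)
       = \<theta>1 * (\<Sum>i=1..n. c i) + \<theta>2 * ((\<Sum>i=1..n. c i) * (\<integral>\<omega>. pmax \<omega> 1 \<partial>P)
           + (\<Sum>j<N. tail_sum n c j * mu j))"
proof -
  have "integrable P (\<lambda>\<omega>. pmax \<omega> 1)"
    using two_le_n by (intro square_integrable_integrable finite_measure_P pmax_square_integrable) auto
  moreover have "integrable P (spacing_comb (tail_sum n c))"
    by (rule square_integrable_integrable[OF finite_measure_P spacing_comb_square_integrable])
  ultimately show ?thesis
    using prob_space.prob_space[OF prob_space_P]
    by (simp add: lin_est_eq[OF assms] integral_spacing_comb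
        finite_measure.integrable_const[OF finite_measure_P])
qed

lemma unbiased_scale_iff:
  "unbiased_scale n M c \<longleftrightarrow> (\<Sum>i=1..n. c i) = 0 \<and> (\<Sum>j<N. tail_sum n c j * mu j) = 1"
proof
  assume "unbiased_scale n M c"
  then have "(\<integral>\<omega>. lin_est n c \<theta>1 1 \<omega> \<partial>P) = 1" for \<theta>1
    unfolding unbiased_scale_def by simp
  from this[of 0] this[of 1] show "(\<Sum>i=1..n. c i) = 0 \<and> (\<Sum>j<N. tail_sum n c j * mu j) = 1"
    by (simp add: integral_lin_est)
next
  assume "(\<Sum>i=1..n. c i) = 0 \<and> (\<Sum>j<N. tail_sum n c j * mu j) = 1"
  then show "unbiased_scale n M c" by (simp add: unbiased_scale_def integral_lin_est)
qed

lemma est_var_eq: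
  assumes sum_zero: "(\<Sum>i=1..n. c i) = 0" and \<theta>2: "0 < \<theta>2"
  shows "est_var n M c \<theta>1 \<theta>2 = \<theta>2\<^sup>2 * bilinear_form N S (tail_sum n c) (tail_sum n c)"
proof -
  let ?t = "tail_sum n c"
  let ?Y = "\<lambda>\<omega>. \<Sum>j<N. ?t j * (spacing (Suc j) \<omega> - mu j)"
  have "(\<integral>\<omega>. lin_est n c \<theta>1 \<theta>2 \<omega> \<partial>P) = \<theta>2 * (\<Sum>j<N. ?t j * mu j)"
    using sum_zero by (simp add: integral_lin_est \<theta>2)
  then have "lin_est n c \<theta>1 \<theta>2 \<omega> - (\<integral>\<omega>. lin_est n c \<theta>1 \<theta>2 \<omega> \<partial>P) = \<theta>2 * ?Y \<omega>" for \<omega>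
    using sum_zero \<theta>2
    by (simp add: lin_est_invariant spacing_comb_def right_diff_distrib sum_subtractf)
  then have "est_var n M c \<theta>1 \<theta>2 = (\<integral>\<omega>. \<theta>2\<^sup>2 * (?Y \<omega> * ?Y \<omega>) \<partial>P)"
    unfolding est_var_def by (simp add: power2_eq_square mult_ac)
  also have "\<dots> = \<theta>2\<^sup>2 * bilinear_form N S ?t ?t"
    unfolding bilinear_form_S by simp
  finally show ?thesis .
qed

lemma est_mse_eq:
  assumes sum_zero: "(\<Sum>i=1..n. c i) = 0" and \<theta>2: "0 < \<theta>2"
  shows "est_mse n M c \<theta>1 \<theta>2
       = \<theta>2\<^sup>2 * (bilinear_form N D (tail_sum n c) (tail_sum n c) - 2 * (\<Sum>j<N. tail_sum n c j * mu j) + 1)"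
proof -
  let ?Q = "spacing_comb (tail_sum n c)"
  have "est_mse n M c \<theta>1 \<theta>2 = (\<integral>\<omega>. \<theta>2\<^sup>2 * (?Q \<omega> * ?Q \<omega> - 2 * ?Q \<omega> + 1) \<partial>P)"
    unfolding est_mse_def using sum_zero \<theta>2
    by (simp add: lin_est_invariant power2_eq_square algebra_simps)
  also have "\<dots> = \<theta>2\<^sup>2 * ((\<integral>\<omega>. ?Q \<omega> * ?Q \<omega> \<partial>P) - 2 * (\<integral>\<omega>. ?Q \<omega> \<partial>P) + 1)"
    using square_integrable_mult_integrable[OF spacing_comb_square_integrable spacing_comb_square_integrable]
      square_integrable_integrable[OF finite_measure_P spacing_comb_square_integrable]
      prob_space.prob_space[OF prob_space_P]
    by (simp add: finite_measure.integrable_const[OF finite_measure_P])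
  finally show ?thesis unfolding bilinear_form_D integral_spacing_comb .
qed

lemma spacing_comb_cong: "(\<And>j. j < N \<Longrightarrow> t j = t' j) \<Longrightarrow> spacing_comb t \<omega> = spacing_comb t' \<omega>"
  unfolding spacing_comb_def by (rule sum.cong) simp_all

text \<open>shrinkage is the constant a = m'D\<inverse>m of the theorem.\<close>
definition S_inv_m :: "nat \<Rightarrow> real" where "S_inv_m j = (mat_inv (S_mat n M) *\<^sub>v m_vec n M) $ j"
definition D_inv_m :: "nat \<Rightarrow> real" where "D_inv_m j = (mat_inv (D_mat n M) *\<^sub>v m_vec n M) $ j"
definition beta :: real where "beta = (\<Sum>i<N. mu i * S_inv_m i)"
definition shrinkage :: real where "shrinkage = (\<Sum>i<N. mu i * D_inv_m i)"
definition blue_tails :: "nat \<Rightarrow> real" where "blue_tails j = S_inv_m j / beta"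

lemma S_mat_eq: "S_mat n M = mat N N (\<lambda>(i, j). S i j)"
  unfolding S_mat_def S_def ..

lemma D_mat_eq: "D_mat n M = mat N N (\<lambda>(i, j). D i j)"
  unfolding D_mat_def D_def ..

lemma m_vec_carrier: "m_vec n M \<in> carrier_vec N"
  by (simp add: m_vec_def)

lemma m_vec_nth: "i < N \<Longrightarrow> m_vec n M $ i = mu i"
  by (simp add: m_vec_def mu_def)

lemma S_inv_m_solves: "i < N \<Longrightarrow> (\<Sum>j<N. S i j * S_inv_m j) = mu i"
  using pos_def_form_mat_inv_solves[OF S_pos_def m_vec_carrier]
  by (simp add: S_inv_m_def S_mat_eq m_vec_nth)

lemma D_inv_m_solves: "i < N \<Longrightarrow> (\<Sum>j<N. D i j * D_inv_m j) = mu i"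
  using pos_def_form_mat_inv_solves[OF D_pos_def m_vec_carrier]
  by (simp add: D_inv_m_def D_mat_eq m_vec_nth)

lemma scalar_prod_m_vec_mat_inv:
  assumes "pos_def_form N K"
  shows "m_vec n M \<bullet> (mat_inv (mat N N (\<lambda>(i, j). K i j)) *\<^sub>v m_vec n M)
       = (\<Sum>i<N. mu i * (mat_inv (mat N N (\<lambda>(i, j). K i j)) *\<^sub>v m_vec n M) $ i)"
  using mat_inv_mult_vec(1)[OF _ pos_def_form_invertible_mat[OF assms] m_vec_carrier]
  by (simp add: scalar_prod_eq_sum m_vec_nth)

lemma beta_eq_scalar_prod: "m_vec n M \<bullet> (mat_inv (S_mat n M) *\<^sub>v m_vec n M) = beta"
  using scalar_prod_m_vec_mat_inv[OF S_pos_def] by (simp add: S_mat_eq beta_def S_inv_m_def)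

lemma shrinkage_eq_scalar_prod: "m_vec n M \<bullet> (mat_inv (D_mat n M) *\<^sub>v m_vec n M) = shrinkage"
  using scalar_prod_m_vec_mat_inv[OF D_pos_def] by (simp add: D_mat_eq shrinkage_def D_inv_m_def)

lemma beta_pos: "0 < beta"
  unfolding beta_def using two_le_n mu_first_pos
  by (intro pos_def_form_solution_pos[OF S_pos_def S_inv_m_solves, of 0]) auto

lemma D_inv_m_eq: "j < N \<Longrightarrow> D_inv_m j = (1 - shrinkage) * S_inv_m j"
  unfolding shrinkage_def
  by (rule rank_one_update_solution[OF S_pos_def D_eq_S_plus_rank_one S_inv_m_solves D_inv_m_solves])

lemma shrinkage_eq: "shrinkage = beta / (1 + beta)"
proof -
  have "shrinkage = (\<Sum>i<N. mu i * D_inv_m i)" by (rule shrinkage_def)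
  also have "\<dots> = (\<Sum>i<N. (1 - shrinkage) * (mu i * S_inv_m i))"
    by (rule sum.cong) (simp_all add: D_inv_m_eq)
  also have "\<dots> = (1 - shrinkage) * beta" by (simp add: beta_def sum_distrib_left)
  finally have "shrinkage = (1 - shrinkage) * beta" .
  with beta_pos show ?thesis by (simp add: field_simps)
qed

lemma shrinkage_pos: "0 < shrinkage" and shrinkage_less_1: "shrinkage < 1"
  using beta_pos by (simp_all add: shrinkage_eq field_simps)

lemma D_inv_m_eq_blue_tails: "j < N \<Longrightarrow> D_inv_m j = shrinkage * blue_tails j"
  using D_inv_m_eq beta_pos by (simp add: shrinkage_eq blue_tails_def field_simps)

lemma sum_blue_tails_mu: "(\<Sum>j<N. blue_tails j * mu j) = 1"
  using beta_pos by (simp add: blue_tails_def beta_def sum_divide_distrib[symmetric] mult.commute)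

lemma est_var_unbiased:
  assumes "unbiased_scale n M c" "0 < \<theta>2"
  shows "est_var n M c \<theta>1 \<theta>2 = \<theta>2\<^sup>2 *
    (bilinear_form N S (\<lambda>j. tail_sum n c j - blue_tails j) (\<lambda>j. tail_sum n c j - blue_tails j) + 1 / beta)"
  using assms beta_pos
    bilinear_form_constrained_min[OF S_sym S_inv_m_solves beta_def, of "tail_sum n c"]
  by (simp add: unbiased_scale_iff est_var_eq blue_tails_def)

lemma est_mse_invariant:
  assumes "invariant_scale n d" "0 < \<theta>2"
  shows "est_mse n M d \<theta>1 \<theta>2 = \<theta>2\<^sup>2 *
    (bilinear_form N D (\<lambda>j. tail_sum n d j - D_inv_m j) (\<lambda>j. tail_sum n d j - D_inv_m j) + (1 - shrinkage))"
  using assms bilinear_form_complete_square[OF D_sym D_inv_m_solves, of "tail_sum n d"]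
  by (simp add: invariant_scale_iff est_mse_eq shrinkage_def)

lemma is_BLUE_iff: "is_BLUE n M c \<longleftrightarrow> (\<Sum>i=1..n. c i) = 0 \<and> (\<forall>j<N. tail_sum n c j = blue_tails j)"
proof -
  let ?excess = "\<lambda>c. bilinear_form N S (\<lambda>j. tail_sum n c j - blue_tails j) (\<lambda>j. tail_sum n c j - blue_tails j)"
  have excess_0: "?excess c = 0 \<longleftrightarrow> (\<forall>j<N. tail_sum n c j = blue_tails j)" for c
    using pos_def_form_eq_0_iff[OF S_pos_def] by simp
  have unbiased: "unbiased_scale n M c \<longleftrightarrow> (\<Sum>i=1..n. c i) = 0" if "\<forall>j<N. tail_sum n c j = blue_tails j" for c
    using that sum_blue_tails_mu by (simp add: unbiased_scale_iff)
  have "is_BLUE n M c \<longleftrightarrow> unbiased_scale n M c \<and> ?excess c = 0"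
    unfolding is_BLUE_def
  proof (rule uniform_minimisers_iff[where U = "unbiased_scale n M" and cost = "est_var n M"
        and excess = ?excess and k = "1 / beta" and opt = "coef_of_tails n blue_tails"])
    show "0 \<le> ?excess c" for c using S_pos_def by (simp add: pos_def_form_def)
    show "?excess (coef_of_tails n blue_tails) = 0"
      unfolding excess_0 by (simp add: tail_sum_coef_of_tails)
    then show "unbiased_scale n M (coef_of_tails n blue_tails)"
      using sum_coef_of_tails[of n blue_tails] unfolding excess_0 by (simp add: unbiased)
  qed (rule est_var_unbiased)
  then show ?thesis using excess_0 unbiased by (auto simp: unbiased_scale_iff)
qed

lemma is_BLIE_iff: "is_BLIE n M d \<longleftrightarrow> (\<Sum>i=1..n. d i) = 0 \<and> (\<forall>j<N. tail_sum n d j = D_inv_m j)"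
proof -
  let ?excess = "\<lambda>d. bilinear_form N D (\<lambda>j. tail_sum n d j - D_inv_m j) (\<lambda>j. tail_sum n d j - D_inv_m j)"
  have excess_0: "?excess d = 0 \<longleftrightarrow> (\<forall>j<N. tail_sum n d j = D_inv_m j)" for d
    using pos_def_form_eq_0_iff[OF D_pos_def] by simp
  have "is_BLIE n M d \<longleftrightarrow> invariant_scale n d \<and> ?excess d = 0"
    unfolding is_BLIE_def
  proof (rule uniform_minimisers_iff[where U = "invariant_scale n" and cost = "est_mse n M"
        and excess = ?excess and k = "1 - shrinkage" and opt = "coef_of_tails n D_inv_m"])
    show "0 \<le> ?excess d" for d using D_pos_def by (simp add: pos_def_form_def)
    show "?excess (coef_of_tails n D_inv_m) = 0"
      unfolding excess_0 by (simp add: tail_sum_coef_of_tails)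
    show "invariant_scale n (coef_of_tails n D_inv_m)"
      using sum_coef_of_tails[of n D_inv_m] by (simp add: invariant_scale_iff)
  qed (rule est_mse_invariant)
  then show ?thesis using excess_0 by (simp add: invariant_scale_iff)
qed

lemma BLUE_exists: "is_BLUE n M (coef_of_tails n blue_tails)"
  using sum_coef_of_tails[of n blue_tails] by (simp add: is_BLUE_iff tail_sum_coef_of_tails)

lemma BLIE_exists: "is_BLIE n M (coef_of_tails n D_inv_m)"
  using sum_coef_of_tails[of n D_inv_m] by (simp add: is_BLIE_iff tail_sum_coef_of_tails)

lemma BLUE_eq:
  "is_BLUE n M c \<Longrightarrow> 0 < \<theta>2 \<Longrightarrow> lin_est n c \<theta>1 \<theta>2 \<omega> = \<theta>2 * spacing_comb blue_tails \<omega>"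
  by (simp add: is_BLUE_iff lin_est_invariant spacing_comb_cong[of "tail_sum n c" blue_tails])

lemma BLIE_eq:
  "is_BLIE n M d \<Longrightarrow> 0 < \<theta>2 \<Longrightarrow> lin_est n d \<theta>1 \<theta>2 \<omega> = shrinkage * (\<theta>2 * spacing_comb blue_tails \<omega>)"
  using spacing_comb_cong[of "tail_sum n d" "\<lambda>j. shrinkage * blue_tails j" \<omega>]
  by (simp add: is_BLIE_iff lin_est_invariant D_inv_m_eq_blue_tails spacing_comb_def sum_distrib_left mult_ac)

lemma BLIE_eq_shrinkage_BLUE:
  "is_BLUE n M c \<Longrightarrow> is_BLIE n M d \<Longrightarrow> 0 < \<theta>2
   \<Longrightarrow> lin_est n d \<theta>1 \<theta>2 \<omega> = shrinkage * lin_est n c \<theta>1 \<theta>2 \<omega>"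
  by (simp add: BLUE_eq BLIE_eq)

lemma blue_tails_nonneg:
  assumes "\<And>i j. i < N \<Longrightarrow> j < N \<Longrightarrow> i \<noteq> j \<Longrightarrow> S i j \<le> 0" "j < N"
  shows "0 \<le> blue_tails j"
  using pos_def_form_solution_nonneg[OF S_pos_def assms(1) S_inv_m_solves mu_nonneg assms(2)] beta_pos
  by (simp add: blue_tails_def)

lemma BLUE_BLIE_nonneg:
  assumes "\<And>i j. i < N \<Longrightarrow> j < N \<Longrightarrow> i \<noteq> j \<Longrightarrow> S i j \<le> 0"
    and "is_BLUE n M c" "is_BLIE n M d" "0 < \<theta>2"
  shows "0 \<le> lin_est n c \<theta>1 \<theta>2 \<omega> \<and> 0 \<le> lin_est n d \<theta>1 \<theta>2 \<omega>"
proof -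
  have "0 \<le> spacing_comb blue_tails \<omega>"
    unfolding spacing_comb_def using blue_tails_nonneg[OF assms(1)]
    by (auto intro!: sum_nonneg mult_nonneg_nonneg spacing_nonneg)
  then show ?thesis using assms(2-4) shrinkage_pos by (simp add: BLUE_eq BLIE_eq)
qed

end

theorem theorem4p1:
  fixes M :: "real measure" and n :: nat
  assumes F: "real_distribution M"
    and finite_var: "integrable M (\<lambda>x. x\<^sup>2)"
    and nondegenerate: "\<forall>c. measure M {c} \<noteq> 1"
    and n2: "n \<ge> 2"
  shows "let m = m_vec n M; S = S_mat n M; D = D_mat n M;
             a = m \<bullet> (mat_inv D *\<^sub>v m)
         in invertible_mat D \<and> invertible_mat S \<and> 0 < a \<and> a < 1 \<and>
            a = (m \<bullet> (mat_inv S *\<^sub>v m)) / (1 + m \<bullet> (mat_inv S *\<^sub>v m)) \<and>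
            (\<exists>c. is_BLUE n M c) \<and> (\<exists>d. is_BLIE n M d) \<and>
            (\<forall>c d. is_BLUE n M c \<longrightarrow> is_BLIE n M d \<longrightarrow>
               (\<forall>\<theta>1 \<theta>2. \<theta>2 > 0 \<longrightarrow>
                  (AE \<omega> in pm_sample n M. lin_est n d \<theta>1 \<theta>2 \<omega> = a * lin_est n c \<theta>1 \<theta>2 \<omega>))) \<and>
            ((n = 2 \<or> (\<forall>i j. 1 \<le> i \<longrightarrow> i \<le> n - 1 \<longrightarrow> 1 \<le> j \<longrightarrow> j \<le> n - 1 \<longrightarrow> i \<noteq> j \<longrightarrow>
                         spacing_cov n M i j \<le> 0)) \<longrightarrow>
             (\<forall>c d. is_BLUE n M c \<longrightarrow> is_BLIE n M d \<longrightarrow>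
               (\<forall>\<theta>1 \<theta>2. \<theta>2 > 0 \<longrightarrow>
                  (AE \<omega> in pm_sample n M. lin_est n c \<theta>1 \<theta>2 \<omega> \<ge> 0 \<and> lin_est n d \<theta>1 \<theta>2 \<omega> \<ge> 0))))"
proof -
  interpret partial_maxima_sample M n
    using nondegenerate
    by (intro partial_maxima_sample.intro partial_maxima_sample_axioms.intro F finite_var n2) auto
  have offdiag: "S i j \<le> 0"
    if "n = 2 \<or> (\<forall>i j. 1 \<le> i \<longrightarrow> i \<le> n - 1 \<longrightarrow> 1 \<le> j \<longrightarrow> j \<le> n - 1 \<longrightarrow> i \<noteq> j \<longrightarrow>
                 spacing_cov n M i j \<le> 0)" and "i < N" "j < N" "i \<noteq> j" for i j
    using that by (auto simp: S_def)
  show ?thesis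
    unfolding Let_def beta_eq_scalar_prod shrinkage_eq_scalar_prod
    using pos_def_form_invertible_mat[OF S_pos_def] pos_def_form_invertible_mat[OF D_pos_def]
      shrinkage_pos shrinkage_less_1 shrinkage_eq BLUE_exists BLIE_exists
      BLIE_eq_shrinkage_BLUE BLUE_BLIE_nonneg[OF offdiag]
    by (auto simp: S_mat_eq D_mat_eq intro!: AE_I2)
qed

end
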